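(* Define $\rho:\mathbb{C}\to\mathbb{C}$ by $\rho(re^{i\theta})=r\,r_\gamma(\theta)e^{i\theta}$ and let $\mathcal{L}=\max(\mathrm{Lip}(\rho),\mathrm{Lip}(\rho^{-1}))$. Fix $\varepsilon>0$ such that $\varepsilon':=\frac32\mathcal{L}^2\varepsilon\le\frac14$, and for $l\ge0$ let $n_l=\lceil2\pi\varepsilon^{-1}(1+(1+\varepsilon)^l)\rceil$. For $l\ge0$ and $1\le j\le n_l$ let $r_l=1+(1+\varepsilon)^{-l}$, $\theta_{j,l}=-\pi+\frac{2\pi}{n_l}j$, and $q_{j,l}=r_l\,r_\gamma(\theta_{j,l})e^{i\theta_{j,l}}$. Then $\bigcup_{l=0}^\infty\{q_{j,l}\}_{j=1}^{n_l}$ is an $\varepsilon'$-fine Whitney set for $\Omega^-_{1/\mathcal{L}}$ with respect to $\gamma$.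
   Context: Let $r_\gamma:\mathbb{R}\to(0,\infty)$ be a $2\pi$-periodic Lipschitz function, $\gamma=\{r_\gamma(\theta)e^{i\theta}:0\le\theta\le2\pi\}$, $\Omega^+$ the bounded domain enclosed by $\gamma$, $\Omega^-=\mathbb{C}\setminus\overline{\Omega^+}$, $d(z)=\mathrm{dist}(z,\gamma)$, and $\Omega^-_\delta=\{z\in\Omega^-:d(z)<\delta\}$. Whitney sets: for $A\subset\mathbb{R}^n$ closed, $\mathcal{O}\subset A^c$ and $\varepsilon\le1/2$, a countable set $\{x_j\}\subset A^c$ is an $\varepsilon$-fine Whitney set for $\mathcal{O}$ with respect to $A$ if (i) $\mathcal{O}\subset\bigcup_jB(x_j,\varepsilon\,\mathrm{dist}(x_j,A))$ (open balls), and (ii) $\sup_{x}\sum_j\chi_{B(x_j,\varepsilon\,\mathrm{dist}(x_j,A))}(x)<\infty$. *)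

theory Defs
  imports "HOL-Analysis.Analysis"
begin

definition curve :: "(real \<Rightarrow> real) \<Rightarrow> complex set" where
  "curve r = (\<lambda>\<theta>. complex_of_real (r \<theta>) * cis \<theta>) ` {0..2*pi}"

definition Omega_plus :: "(real \<Rightarrow> real) \<Rightarrow> complex set" where
  "Omega_plus r = inside (curve r)"

definition Omega_minus :: "(real \<Rightarrow> real) \<Rightarrow> complex set" where
  "Omega_minus r = - closure (Omega_plus r)"

definition Omega_minus_delta :: "(real \<Rightarrow> real) \<Rightarrow> real \<Rightarrow> complex set" where
  "Omega_minus_delta r \<delta> = {z \<in> Omega_minus r. infdist z (curve r) < \<delta>}"

text \<open>rho(r e^{i theta}) = r * r_gamma(theta) e^{i theta} (well defined by periodicity; rho 0 = 0).\<close>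
definition rho :: "(real \<Rightarrow> real) \<Rightarrow> complex \<Rightarrow> complex" where
  "rho r z = complex_of_real (cmod z * r (Arg z)) * cis (Arg z)"

definition Lip :: "('a::metric_space \<Rightarrow> 'b::metric_space) \<Rightarrow> real" where
  "Lip f = Inf {L. L-lipschitz_on UNIV f}"

definition whitney_set :: "real \<Rightarrow> 'a::euclidean_space set \<Rightarrow> 'a set \<Rightarrow> 'a set \<Rightarrow> bool" where
  "whitney_set \<epsilon> U A X \<longleftrightarrow>
     closed A \<and> U \<subseteq> - A \<and> \<epsilon> \<le> 1/2 \<and>
     countable X \<and> X \<subseteq> - A \<and>
     U \<subseteq> (\<Union>x\<in>X. ball x (\<epsilon> * infdist x A)) \<and>
     (\<exists>M::nat. \<forall>y. finite {x \<in> X. y \<in> ball x (\<epsilon> * infdist x A)} \<and>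
                    card {x \<in> X. y \<in> ball x (\<epsilon> * infdist x A)} \<le> M)"

end

theory Submission
  imports Defs
begin

text \<open>
  The map \<open>rho\<close> is bi-Lipschitz with constant \<open>L\<close> and maps the circle \<open>|w| = s\<close> onto the
  dilate \<open>s \<gamma>\<close>, so all estimates are made after pulling back by \<open>rho\<^sup>-\<^sup>1\<close>. A point \<open>z\<close>
  of \<open>\<Omega>\<^sup>-\<close> with \<open>d(z) < 1/L\<close> has \<open>|rho\<^sup>-\<^sup>1 z| = s\<close> with \<open>1 < s < 2\<close>. Take the layer \<open>l\<close>
  with \<open>t\<^sub>l\<^sub>+\<^sub>1 < s - 1 \<le> t\<^sub>l\<close>, where \<open>t\<^sub>l = (1+\<epsilon>)^-l\<close>, and the first grid angle above
  \<open>arg (rho\<^sup>-\<^sup>1 z)\<close>: the radial and the angular error are both at most \<open>\<epsilon> t\<^sub>l\<close>, so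
  \<open>|q - z| < 3/2 L \<epsilon> t\<^sub>l\<close>, while \<open>d(q) \<ge> t\<^sub>l / L\<close>. For the bounded overlap, all centres
  \<open>q\<close> whose ball contains a given \<open>y\<close> have \<open>d(q)\<close> comparable to \<open>d(y)\<close>, hence lie in
  \<open>O(L^2/\<epsilon>)\<close> consecutive layers; within one layer their angles lie in an arc of length
  \<open>O(L^2 \<epsilon>' t\<^sub>l)\<close>, while the grid spacing \<open>2 pi / n\<^sub>l\<close> is of order \<open>\<epsilon> t\<^sub>l\<close>.
\<close>

section \<open>Elementary estimates\<close>

lemma cos_ge_one_minus_sq_half: "1 - x^2 / 2 \<le> cos (x::real)"
proof -
  have "cos x = 1 - 2 * sin (x/2)^2"
    using cos_double_sin[of "x/2"] by simp
  moreover have "sin (x/2)^2 \<le> (x/2)^2"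
    using abs_sin_x_le_abs_x[of "x/2"] by (metis abs_le_square_iff abs_ge_zero)
  ultimately show ?thesis by (simp add: power_divide)
qed

lemma sin_ge_cubic:
  fixes x :: real assumes "0 \<le> x"
  shows "x - x^3 / 6 \<le> sin x"
proof -
  let ?g = "\<lambda>x. sin x - x + x^3 / 6"
  have "\<exists>y. (?g has_real_derivative y) (at u) \<and> 0 \<le> y" for u
  proof -
    have "(?g has_real_derivative (cos u - 1 + u^2 / 2)) (at u)"
      by (auto intro!: derivative_eq_intros simp: power2_eq_square)
    then show ?thesis using cos_ge_one_minus_sq_half[of u] by fastforce
  qed
  then have "?g 0 \<le> ?g x"
    using DERIV_nonneg_imp_nondecreasing[OF assms] by blast
  then show ?thesis by simp
qed

lemma sin_ge_quarter:
  fixes x :: real assumes "0 \<le> x" "x \<le> pi/2"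
  shows "x / 4 \<le> sin x"
proof -
  have "x * x \<le> 2 * 2"
    using assms pi_less_4 by (intro mult_mono) auto
  then have "x * (x * x) \<le> x * 4"
    using assms(1) by (intro mult_left_mono) auto
  then have "x / 4 \<le> x - x^3 / 6"
    using assms(1) by (simp add: power3_eq_cube)
  then show ?thesis using sin_ge_cubic[OF assms(1)] by linarith
qed

lemma norm_cis_minus_one: "cmod (cis a - 1) = 2 * \<bar>sin (a/2)\<bar>"
proof -
  have "(cmod (cis a - 1))^2 = (cos a - 1)^2 + (sin a)^2"
    by (simp add: cmod_power2)
  also have "\<dots> = 2 - 2 * cos a"
    using sin_cos_squared_add[of a] by (simp add: power2_diff)
  also have "\<dots> = (2 * \<bar>sin (a/2)\<bar>)^2"
    using cos_double_sin[of "a/2"] by (simp add: power_mult_distrib)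
  finally show ?thesis
    by (rule power2_eq_imp_eq) simp_all
qed

lemma norm_cis_minus_one_ge:
  assumes "\<bar>a\<bar> \<le> pi" shows "\<bar>a\<bar> / 4 \<le> cmod (cis a - 1)"
proof -
  have "\<bar>a\<bar> / 2 / 4 \<le> sin (\<bar>a\<bar> / 2)"
    using assms by (intro sin_ge_quarter) auto
  also have "sin (\<bar>a\<bar> / 2) = \<bar>sin (a/2)\<bar>"
    using sin_ge_zero[of "\<bar>a\<bar>/2"] assms by (cases "0 \<le> a") auto
  finally show ?thesis by (simp add: norm_cis_minus_one)
qed

lemma norm_cis_diff: "cmod (cis a - cis b) = cmod (cis (a - b) - 1)"
proof -
  have "cis b * cis (a - b) = cis a"
    by (simp add: cis_mult)
  then have "cis a - cis b = cis b * (cis (a - b) - 1)"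
    by (simp add: algebra_simps)
  then show ?thesis by (simp add: norm_mult)
qed

text \<open>The law of cosines together with \<open>1 - cos x \<le> x^2/2\<close>.\<close>
lemma norm_polar_diff_sq_le:
  assumes "0 \<le> s" "s \<le> r"
  shows "(cmod (of_real r * cis \<theta> - of_real s * cis \<phi>))^2 \<le> (r - s)^2 + (r * (\<theta> - \<phi>))^2"
proof -
  have "(cmod (of_real r * cis \<theta> - of_real s * cis \<phi>))^2
      = (r * cos \<theta> - s * cos \<phi>)^2 + (r * sin \<theta> - s * sin \<phi>)^2"
    by (simp add: cmod_power2)
  also have "\<dots> = r^2 + s^2 - 2 * r * s * cos (\<theta> - \<phi>)"
    using sin_cos_squared_add[of \<theta>] sin_cos_squared_add[of \<phi>] unfolding cos_diff by algebra
  also have "\<dots> \<le> r^2 + s^2 - 2 * r * s * (1 - (\<theta> - \<phi>)^2 / 2)"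
    using mult_left_mono[OF cos_ge_one_minus_sq_half, of "2 * r * s" "\<theta> - \<phi>"] assms by simp
  also have "\<dots> = (r - s)^2 + (r * s) * (\<theta> - \<phi>)^2"
    by (simp add: power2_eq_square field_simps)
  also have "\<dots> \<le> (r - s)^2 + (r * r) * (\<theta> - \<phi>)^2"
    using assms by (intro add_left_mono mult_right_mono mult_left_mono) auto
  finally show ?thesis by (simp add: power2_eq_square algebra_simps)
qed

lemma norm_sgn_diff_le:
  fixes z w :: complex assumes "w \<noteq> 0"
  shows "cmod w * cmod (sgn z - sgn w) \<le> 2 * cmod (z - w)"
proof (cases "z = 0")
  case True
  then show ?thesis using assms by (simp add: norm_sgn norm_minus_commute)
next
  case False
  have sw: "of_real (cmod w) * sgn w = w" and sz: "of_real (cmod z) * sgn z = z"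
    using assms False by (simp_all add: sgn_div_norm scaleR_conv_of_real)
  have "of_real (cmod w / cmod z - 1) * z = of_real (cmod w / cmod z) * (of_real (cmod z) * sgn z) - z"
    using sz by (simp add: algebra_simps)
  also have "\<dots> = of_real (cmod w) * sgn z - z"
    using False by (simp add: mult.assoc[symmetric])
  finally have e: "of_real (cmod w) * (sgn z - sgn w) = of_real (cmod w / cmod z - 1) * z + (z - w)"
    using sw by (simp add: algebra_simps)
  have "cmod w * cmod (sgn z - sgn w) = cmod (of_real (cmod w) * (sgn z - sgn w))"
    by (simp add: norm_mult)
  also have "\<dots> \<le> cmod (of_real (cmod w / cmod z - 1) * z) + cmod (z - w)"
    unfolding e by (rule norm_triangle_ineq)
  also have "cmod (of_real (cmod w / cmod z - 1) * z) = \<bar>(cmod w / cmod z - 1) * cmod z\<bar>"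
    by (simp only: norm_mult norm_of_real) (simp add: abs_mult)
  also have "(cmod w / cmod z - 1) * cmod z = cmod w - cmod z"
    using False by (simp add: field_simps)
  also have "\<bar>cmod w - cmod z\<bar> \<le> cmod (z - w)"
    by (metis norm_minus_commute norm_triangle_ineq3)
  finally show ?thesis by linarith
qed

lemma norm_diff_sgn:
  assumes "u \<noteq> 0" shows "cmod (u - sgn u) = \<bar>cmod u - 1\<bar>"
proof -
  have "of_real (cmod u) * sgn u = u"
    using assms by (simp add: sgn_div_norm scaleR_conv_of_real)
  then have "u - sgn u = of_real (cmod u - 1) * sgn u"
    by (simp add: algebra_simps)
  then have "cmod (u - sgn u) = \<bar>cmod u - 1\<bar> * cmod (sgn u)"
    by (simp only: norm_mult norm_of_real)
  then show ?thesis using assms by (simp add: norm_sgn)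
qed

lemma infdist_comparable:
  assumes "dist q y < e * infdist q A" "e \<le> 1/4"
  shows "3/4 * infdist q A \<le> infdist y A" "infdist y A \<le> 5/4 * infdist q A"
proof -
  have "e * infdist q A \<le> 1/4 * infdist q A"
    using assms(2) infdist_nonneg by (rule mult_right_mono)
  then show "3/4 * infdist q A \<le> infdist y A" "infdist y A \<le> 5/4 * infdist q A"
    using infdist_triangle_abs[of q A y] assms(1) by linarith+
qed

lemma norm_cis_grid_diff_ge:
  assumes n: "1 \<le> n" and j: "j \<le> n" and k: "k \<le> n"
  shows "pi / (2 * real n) * min \<bar>real j - real k\<bar> (real n - \<bar>real j - real k\<bar>)
         \<le> cmod (cis (-pi + 2*pi / real n * real j) - cis (-pi + 2*pi / real n * real k))"
proof -
  define D where "D = real j - real k"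
  have n0: "0 < real n" using n by simp
  have Dn: "\<bar>D\<bar> \<le> real n" unfolding D_def using j k by linarith
  have "(-pi + 2*pi / real n * real j) - (-pi + 2*pi / real n * real k) = 2*pi / real n * D"
    unfolding D_def by (simp add: algebra_simps diff_divide_distrib)
  then have dist_eq: "cmod (cis (-pi + 2*pi / real n * real j) - cis (-pi + 2*pi / real n * real k))
          = cmod (cis (2*pi / real n * E) - 1)" if "cis (2*pi / real n * E) = cis (2*pi / real n * D)" for E
    using that by (simp add: norm_cis_diff)
  have half_turn: "pi / (2 * real n) * \<bar>E\<bar> \<le> cmod (cis (2*pi / real n * E) - 1)"
    if "2 * \<bar>E\<bar> \<le> real n" for E
  proof -
    have "\<bar>2*pi / real n * E\<bar> = 2*pi / real n * \<bar>E\<bar>" using n0 by (simp add: abs_mult)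
    also have "\<dots> \<le> 2*pi / real n * (real n / 2)" using that n0 by (intro mult_left_mono) auto
    finally have "\<bar>2*pi / real n * E\<bar> \<le> pi" using n0 by simp
    from norm_cis_minus_one_ge[OF this] show ?thesis using n0 by (simp add: abs_mult)
  qed
  have "0 \<le> pi / (2 * real n)" using n0 by simp
  show ?thesis
  proof (cases "2 * \<bar>D\<bar> \<le> real n")
    case True
    have "pi / (2 * real n) * min \<bar>D\<bar> (real n - \<bar>D\<bar>) \<le> pi / (2 * real n) * \<bar>D\<bar>"
      using \<open>0 \<le> pi / (2 * real n)\<close> by (intro mult_left_mono) auto
    with half_turn[OF True] dist_eq[of D] show ?thesis unfolding D_def by simp
  next
    case False
    text \<open>The angles are closer the other way round the circle.\<close>
    define D' where "D' = (if 0 < D then D - real n else D + real n)"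
    have aD': "\<bar>D'\<bar> = real n - \<bar>D\<bar>" unfolding D'_def using Dn False by auto
    have "2*pi / real n * D' = 2*pi / real n * D + (if 0 < D then - 2*pi else 2*pi)"
      unfolding D'_def using n0 by (simp add: field_simps)
    then have "cis (2*pi / real n * D') = cis (2*pi / real n * D)"
      by (simp add: cis_mult[symmetric] flip: cis_inverse)
    moreover have "pi / (2 * real n) * min \<bar>D\<bar> (real n - \<bar>D\<bar>) \<le> pi / (2 * real n) * \<bar>D'\<bar>"
      using \<open>0 \<le> pi / (2 * real n)\<close> aD' by (intro mult_left_mono) auto
    moreover have "2 * \<bar>D'\<bar> \<le> real n" using aD' False by linarith
    ultimately show ?thesis using half_turn[of D'] dist_eq[of D'] unfolding D_def by simp
  qed
qed

lemma card_cyclically_close_le: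
  fixes J :: "nat set"
  assumes sub: "J \<subseteq> {1..n}"
    and close: "\<forall>j\<in>J. \<forall>k\<in>J. min \<bar>real j - real k\<bar> (real n - \<bar>real j - real k\<bar>) < c"
  shows "card J \<le> 4 * nat \<lceil>c\<rceil> + 3"
proof (cases "J = {}")
  case False
  then obtain j0 where j0: "j0 \<in> J" by blast
  define C where "C = nat \<lceil>c\<rceil>"
  have Cc: "c \<le> real C" unfolding C_def by linarith
  have "J \<subseteq> {j0 - C..j0 + C} \<union> {n - C..n} \<union> {0..C}"
  proof
    fix k assume kJ: "k \<in> J"
    have "j0 \<le> n" "k \<le> n" using kJ j0 sub by auto
    moreover have "min \<bar>real k - real j0\<bar> (real n - \<bar>real k - real j0\<bar>) < c"
      using close kJ j0 by blast
    ultimately show "k \<in> {j0 - C..j0 + C} \<union> {n - C..n} \<union> {0..C}"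
      using Cc by (cases "\<bar>real k - real j0\<bar> < c"; cases "j0 \<le> k") auto
  qed
  then have "card J \<le> card ({j0 - C..j0 + C} \<union> {n - C..n} \<union> {0..C})"
    by (intro card_mono) auto
  also have "\<dots> \<le> card {j0 - C..j0 + C} + card {n - C..n} + card {0..C}"
    using card_Un_le[of "{j0 - C..j0 + C}" "{n - C..n}"] card_Un_le[of "{j0 - C..j0 + C} \<union> {n - C..n}" "{0..C}"]
    by linarith
  also have "\<dots> \<le> (2*C + 1) + (C + 1) + (C + 1)" by simp
  finally show ?thesis unfolding C_def by simp
qed simp

section \<open>Periodic radius functions\<close>

lemma periodic_int:
  assumes per: "\<forall>\<theta>. f (\<theta> + 2*pi) = f \<theta>"
  shows "f (b + 2*pi * real_of_int k) = f b"
proof (induction k rule: int_induct[where k = 0])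
  case (step1 i)
  then show ?case using per[rule_format, of "b + 2*pi * real_of_int i"] by (simp add: algebra_simps)
next
  case (step2 i)
  then show ?case using per[rule_format, of "b + 2*pi * real_of_int (i - 1)"] by (simp add: algebra_simps)
qed simp

lemma periodic_cis_eq:
  assumes per: "\<forall>\<theta>. f (\<theta> + 2*pi) = f \<theta>" and "cis a = cis b"
  shows "f a = f b"
proof -
  have "cos a = cos b" "sin a = sin b"
    using arg_cong[OF assms(2), of Re] arg_cong[OF assms(2), of Im] by simp_all
  then obtain k :: int where "a = b + 2*pi * k"
    using sin_cos_eq_iff[of a b] by auto
  then show ?thesis using periodic_int[OF per] by simp
qed

lemma periodic_Arg_cis:
  assumes per: "\<forall>\<theta>. f (\<theta> + 2*pi) = f \<theta>"
  shows "f (Arg (cis t)) = f t"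
  by (rule periodic_cis_eq[OF per]) (simp add: cis_Arg)

lemma periodic_Arg_diff_le:
  fixes \<phi> :: "real \<Rightarrow> real"
  assumes per: "\<forall>\<theta>. \<phi> (\<theta> + 2*pi) = \<phi> \<theta>" and lip: "K-lipschitz_on UNIV \<phi>"
    and "z \<noteq> 0" "w \<noteq> 0"
  shows "\<bar>\<phi> (Arg z) - \<phi> (Arg w)\<bar> \<le> 4 * K * cmod (sgn z - sgn w)"
proof -
  text \<open>Represent \<open>Arg z\<close> modulo \<open>2 pi\<close> by \<open>b\<close> with \<open>|b - Arg w| \<le> pi\<close>.\<close>
  define e where "e = sgn z * cnj (sgn w)"
  have unit_w: "sgn w * cnj (sgn w) = 1"
    using complex_norm_square[of "sgn w"] assms by (simp add: norm_sgn)
  have "cmod e = 1" unfolding e_def using assms by (simp add: norm_mult norm_sgn)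
  moreover have "e \<noteq> 0" using \<open>cmod e = 1\<close> by auto
  ultimately have cis_e: "cis (Arg e) = e"
    by (simp add: cis_Arg sgn_div_norm)
  define b where "b = Arg w + Arg e"
  have "cis b = sgn w * e" unfolding b_def using assms by (simp add: cis_mult[symmetric] cis_Arg cis_e)
  also have "\<dots> = cis (Arg z)" unfolding e_def using unit_w assms by (simp add: cis_Arg algebra_simps)
  finally have "\<phi> (Arg z) = \<phi> b" by (rule periodic_cis_eq[OF per, symmetric])
  then have phi_diff: "\<bar>\<phi> (Arg z) - \<phi> (Arg w)\<bar> \<le> K * \<bar>Arg e\<bar>"
    using lipschitz_onD[OF lip, of b "Arg w"] by (simp add: dist_real_def b_def)
  have "\<bar>Arg e\<bar> \<le> 4 * cmod (e - 1)"
    using norm_cis_minus_one_ge[of "Arg e"] Arg_bounded[of e] cis_e by (auto simp: abs_le_iff)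
  also have "e - 1 = (sgn z - sgn w) * cnj (sgn w)"
    unfolding e_def using unit_w by (simp add: algebra_simps)
  finally have "\<bar>Arg e\<bar> \<le> 4 * cmod (sgn z - sgn w)"
    using assms by (simp add: norm_mult norm_sgn)
  then have "K * \<bar>Arg e\<bar> \<le> 4 * K * cmod (sgn z - sgn w)"
    using mult_left_mono[OF _ lipschitz_on_nonneg[OF lip]] by (metis mult.assoc mult.commute)
  with phi_diff show ?thesis by linarith
qed

lemma lipschitz_on_Arg_scale:
  fixes \<phi> :: "real \<Rightarrow> real"
  assumes per: "\<forall>\<theta>. \<phi> (\<theta> + 2*pi) = \<phi> \<theta>"
    and lip: "K-lipschitz_on UNIV \<phi>" and bd: "\<forall>x. \<bar>\<phi> x\<bar> \<le> M"
  shows "(M + 8*K)-lipschitz_on UNIV (\<lambda>z. of_real (\<phi> (Arg z)) * z)"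
proof (rule lipschitz_onI)
  have K0: "0 \<le> K" using lip by (rule lipschitz_on_nonneg)
  have M0: "0 \<le> M" using bd by (meson abs_ge_zero order_trans)
  then show "0 \<le> M + 8*K" using K0 by simp
  have scale: "cmod (of_real (\<phi> (Arg u)) * v) \<le> M * cmod v" for u v
    using bd by (simp add: norm_mult mult_right_mono)
  fix z w :: complex
  show "dist (of_real (\<phi> (Arg z)) * z) (of_real (\<phi> (Arg w)) * w) \<le> (M + 8*K) * dist z w"
  proof (cases "z = 0 \<or> w = 0")
    case True
    then have "dist (of_real (\<phi> (Arg z)) * z) (of_real (\<phi> (Arg w)) * w) \<le> M * dist z w"
      using scale by (auto simp: dist_norm)
    also have "\<dots> \<le> (M + 8*K) * dist z w" using K0 by (simp add: mult_right_mono)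
    finally show ?thesis .
  next
    case False
    have "of_real (\<phi> (Arg z)) * z - of_real (\<phi> (Arg w)) * w
        = of_real (\<phi> (Arg z)) * (z - w) + of_real (\<phi> (Arg z) - \<phi> (Arg w)) * w"
      by (simp add: algebra_simps)
    then have "dist (of_real (\<phi> (Arg z)) * z) (of_real (\<phi> (Arg w)) * w)
        \<le> cmod (of_real (\<phi> (Arg z)) * (z - w)) + cmod (of_real (\<phi> (Arg z) - \<phi> (Arg w)) * w)"
      by (simp add: dist_norm norm_triangle_ineq)
    also have "\<dots> \<le> M * cmod (z - w) + \<bar>\<phi> (Arg z) - \<phi> (Arg w)\<bar> * cmod w"
      using scale[of z "z - w"] by (simp only: norm_mult norm_of_real)
    also have "\<bar>\<phi> (Arg z) - \<phi> (Arg w)\<bar> * cmod w \<le> 4 * K * (cmod w * cmod (sgn z - sgn w))"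
      using periodic_Arg_diff_le[OF per lip, of z w] False by (simp add: mult_right_mono mult.commute mult.left_commute)
    also have "\<dots> \<le> 4 * K * (2 * cmod (z - w))"
      using norm_sgn_diff_le[of w z] False K0 by (intro mult_left_mono) auto
    finally show ?thesis by (simp add: dist_norm algebra_simps)
  qed
qed

lemma Lip_lipschitz_on:
  assumes "C-lipschitz_on UNIV g"
  shows "(Lip g)-lipschitz_on UNIV g"
proof -
  let ?S = "{L. L-lipschitz_on UNIV g}"
  have ne: "?S \<noteq> {}" using assms by auto
  have "0 \<le> Lip g" unfolding Lip_def
    by (rule cInf_greatest[OF ne]) (auto intro: lipschitz_on_nonneg)
  then show ?thesis
  proof (rule lipschitz_onI[rotated])
    fix x y :: 'a
    show "dist (g x) (g y) \<le> Lip g * dist x y"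
    proof (cases "x = y")
      case False
      then have d0: "0 < dist x y" by simp
      have "dist (g x) (g y) / dist x y \<le> Lip g" unfolding Lip_def
      proof (rule cInf_greatest[OF ne])
        fix L assume "L \<in> ?S"
        then show "dist (g x) (g y) / dist x y \<le> L"
          using d0 by (auto simp: divide_le_eq dest: lipschitz_onD)
      qed
      then show ?thesis using d0 by (simp add: divide_le_eq)
    qed simp
  qed
qed

section \<open>The radial map\<close>

lemma sublevel_subset_inside:
  fixes g :: "'a::real_normed_vector \<Rightarrow> real"
  assumes cont: "continuous_on UNIV g" and bdd: "bounded {x. g x < c}"
  shows "{x. g x < c} \<subseteq> inside {x. g x = c}"
proof
  fix x assume x: "x \<in> {x. g x < c}"
  define C where "C = connected_component_set (- {x. g x = c}) x"
  have "C \<subseteq> {x. g x < c} \<union> {x. c < g x}"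
    unfolding C_def using connected_component_subset by fastforce
  moreover have "open {x. g x < c}" "open {x. c < g x}"
    using cont by (auto intro: open_Collect_less continuous_on_const)
  moreover have "x \<in> C" unfolding C_def using x by simp
  ultimately have "C \<subseteq> {x. g x < c}"
    using connectedD[of C "{x. g x < c}" "{x. c < g x}"] x unfolding C_def by fastforce
  then show "x \<in> inside {x. g x = c}"
    unfolding inside_def C_def using x bounded_subset[OF bdd] by auto
qed

definition rho_inv :: "(real \<Rightarrow> real) \<Rightarrow> complex \<Rightarrow> complex" where
  "rho_inv f w = of_real (1 / f (Arg w)) * w"

lemma rho_eq: "rho f z = of_real (f (Arg z)) * z"
proof (cases "z = 0")
  case False
  then have "of_real (cmod z) * cis (Arg z) = z"
    by (simp add: cis_Arg sgn_div_norm scaleR_conv_of_real)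
  then show ?thesis unfolding rho_def by (metis mult.commute mult.left_commute of_real_mult)
qed (simp add: rho_def)

locale star_curve =
  fixes f :: "real \<Rightarrow> real"
  assumes periodic: "\<forall>\<theta>. f (\<theta> + 2*pi) = f \<theta>"
    and radius_pos: "\<forall>\<theta>. f \<theta> > 0"
    and radius_lipschitz: "\<exists>K. K-lipschitz_on UNIV f"
begin

lemma rho_inv_rho [simp]: "rho_inv f (rho f z) = z"
proof -
  have "0 < f (Arg z)" using radius_pos by blast
  moreover from this have "Arg (rho f z) = Arg z" by (simp add: rho_eq)
  ultimately show ?thesis
    unfolding rho_inv_def rho_eq by (simp add: mult.assoc[symmetric] flip: of_real_mult)
qed

lemma rho_rho_inv [simp]: "rho f (rho_inv f w) = w"
proof -
  have "0 < f (Arg w)" using radius_pos by blast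
  moreover from this have "Arg (rho_inv f w) = Arg w" unfolding rho_inv_def by simp
  ultimately show ?thesis
    unfolding rho_inv_def rho_eq by (simp add: mult.assoc[symmetric] flip: of_real_mult)
qed

lemma inv_rho: "inv (rho f) = rho_inv f"
proof
  have "inj (rho f)" by (metis injI rho_inv_rho)
  then show "inv (rho f) w = rho_inv f w" for w by (rule inv_f_eq) simp
qed

lemma rho_polar:
  assumes "0 < r" shows "rho f (of_real r * cis t) = of_real (r * f t) * cis t"
proof -
  have "f (Arg (of_real r * cis t)) = f t"
    using assms periodic_Arg_cis[OF periodic] by simp
  then show ?thesis unfolding rho_eq by (simp add: algebra_simps)
qed

lemma radius_bounds:
  obtains m M where "0 < m" "\<And>x. m \<le> f x" "\<And>x. f x \<le> M"
proof -
  obtain K where "K-lipschitz_on UNIV f" using radius_lipschitz by blast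
  then have cont: "continuous_on {-pi..pi} f"
    using lipschitz_on_continuous_on continuous_on_subset by blast
  obtain a where a: "a \<in> {-pi..pi}" "\<And>y. y \<in> {-pi..pi} \<Longrightarrow> f a \<le> f y"
    using continuous_attains_inf[OF _ _ cont] by auto
  obtain b where b: "b \<in> {-pi..pi}" "\<And>y. y \<in> {-pi..pi} \<Longrightarrow> f y \<le> f b"
    using continuous_attains_sup[OF _ _ cont] by auto
  have "f x = f (Arg (cis x)) \<and> Arg (cis x) \<in> {-pi..pi}" for x
    using periodic_Arg_cis[OF periodic, of x] Arg_bounded[of "cis x"] by auto
  then show ?thesis
    using that[of "f a" "f b"] a(2) b(2) radius_pos by metis
qed

lemma ex_lipschitz_rho: "\<exists>C. C-lipschitz_on UNIV (rho f)"
proof -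
  obtain K where "K-lipschitz_on UNIV f" using radius_lipschitz by blast
  moreover obtain M where "\<forall>x. \<bar>f x\<bar> \<le> M"
    using radius_bounds radius_pos by (metis abs_of_pos)
  moreover have "rho f = (\<lambda>z. of_real (f (Arg z)) * z)" by (rule ext) (rule rho_eq)
  ultimately show ?thesis
    using lipschitz_on_Arg_scale[OF periodic] by auto
qed

lemma ex_lipschitz_rho_inv: "\<exists>C. C-lipschitz_on UNIV (rho_inv f)"
proof -
  obtain K where lip: "K-lipschitz_on UNIV f" using radius_lipschitz by blast
  obtain m where m: "0 < m" "\<And>x. m \<le> f x" using radius_bounds by metis
  have K0: "0 \<le> K" using lip by (rule lipschitz_on_nonneg)
  have "\<bar>1 / f x\<bar> \<le> 1 / m" for x
    using m(1) m(2)[of x] radius_pos[rule_format, of x] by (simp add: frac_le)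
  then have bd: "\<forall>x. \<bar>1 / f x\<bar> \<le> 1 / m" by blast
  have lip_inv: "(K / (m*m))-lipschitz_on UNIV (\<lambda>x. 1 / f x)"
  proof (rule lipschitz_onI)
    show "0 \<le> K / (m*m)" using K0 m by simp
    fix x y
    have fx: "0 < f x" and fy: "0 < f y" using radius_pos by auto
    have "dist (1 / f x) (1 / f y) = \<bar>f y - f x\<bar> / (f x * f y)"
      using fx fy by (simp add: dist_real_def field_simps abs_div)
    also have "\<dots> \<le> K * dist x y / (m * m)"
      using lipschitz_onD[OF lip, of y x] fx fy m(1) m(2)[of x] m(2)[of y] K0
      by (intro frac_le mult_mono) (auto simp: dist_commute dist_real_def)
    finally show "dist (1 / f x) (1 / f y) \<le> K / (m*m) * dist x y" by simp
  qed
  have per: "\<forall>\<theta>. 1 / f (\<theta> + 2*pi) = 1 / f \<theta>" using periodic by simp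
  have "rho_inv f = (\<lambda>z. of_real (1 / f (Arg z)) * z)" by (rule ext) (simp add: rho_inv_def)
  then show ?thesis
    using lipschitz_on_Arg_scale[OF per lip_inv bd] by auto
qed

lemma curve_eq: "curve f = {z. cmod (rho_inv f z) = 1}"
proof (intro equalityI subsetI)
  fix z assume "z \<in> curve f"
  then obtain t where "z = rho f (cis t)"
    unfolding curve_def using rho_polar[of 1] by auto
  then show "z \<in> {z. cmod (rho_inv f z) = 1}" by simp
next
  fix z assume "z \<in> {z. cmod (rho_inv f z) = 1}"
  then have n1: "cmod (rho_inv f z) = 1" by simp
  define u where "u = rho_inv f z"
  have "u \<noteq> 0" using n1 unfolding u_def by auto
  then have uc: "cis (Arg u) = u" using n1 unfolding u_def by (simp add: cis_Arg sgn_div_norm)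
  define t where "t = (if Arg u \<ge> 0 then Arg u else Arg u + 2*pi)"
  have "cis t = cis (Arg u)" unfolding t_def by (simp add: cis_mult[symmetric])
  moreover have "t \<in> {0..2*pi}" unfolding t_def using Arg_bounded[of u] by auto
  moreover have "z = rho f (cis t)"
    using uc \<open>cis t = cis (Arg u)\<close> unfolding u_def by simp
  then have "z = of_real (f t) * cis t"
    using rho_polar[of 1 t] by simp
  ultimately show "z \<in> curve f"
    unfolding curve_def by blast
qed

lemma continuous_rho_inv: "continuous_on UNIV (rho_inv f)"
  using ex_lipschitz_rho_inv lipschitz_on_continuous_on by blast

lemma closed_curve: "closed (curve f)"
  unfolding curve_eq
  by (intro closed_Collect_eq continuous_on_norm continuous_rho_inv continuous_on_const)

lemma Omega_minus_subset: "Omega_minus f \<subseteq> {z. 1 < cmod (rho_inv f z)}"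
proof -
  let ?D = "{z. cmod (rho_inv f z) < 1}"
  obtain M where M: "\<And>x. f x \<le> M" using radius_bounds by metis
  then have "0 \<le> M" using radius_pos[rule_format, of 0] M[of 0] by linarith
  have "cmod z \<le> M" if "z \<in> ?D" for z
  proof -
    have "cmod z = cmod (of_real (f (Arg (rho_inv f z))) * rho_inv f z)"
      by (metis rho_eq rho_rho_inv)
    also have "\<dots> = f (Arg (rho_inv f z)) * cmod (rho_inv f z)"
      using radius_pos[rule_format, of "Arg (rho_inv f z)"] by (simp add: norm_mult)
    also have "\<dots> \<le> M * 1"
      using that M radius_pos \<open>0 \<le> M\<close> by (intro mult_mono) (auto simp: less_imp_le)
    finally show ?thesis by simp
  qed
  then have "bounded ?D" by (auto simp: bounded_iff)
  then have D_inside: "?D \<subseteq> Omega_plus f"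
    unfolding Omega_plus_def curve_eq
    by (intro sublevel_subset_inside continuous_on_norm continuous_rho_inv)
  text \<open>The closed sublevel set is the image of the closed unit disc under \<open>rho\<close>.\<close>
  have "rho f ` closure (ball 0 1) \<subseteq> closure ?D"
  proof (rule image_closure_subset)
    show "continuous_on (closure (ball 0 1)) (rho f)"
      using ex_lipschitz_rho lipschitz_on_continuous_on continuous_on_subset by blast
    show "rho f ` ball 0 1 \<subseteq> closure ?D"
      using closure_subset by fastforce
  qed simp
  then have "{z. cmod (rho_inv f z) \<le> 1} \<subseteq> closure ?D"
    by (force intro: image_eqI[of _ "rho f", OF rho_rho_inv[symmetric]])
  with closure_mono[OF D_inside] show ?thesis
    unfolding Omega_minus_def by (auto simp: not_less)
qed

end

locale bilipschitz_star_curve = star_curve +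
  fixes L :: real
  assumes lipschitz_rho: "L-lipschitz_on UNIV (rho f)"
    and lipschitz_rho_inv: "L-lipschitz_on UNIV (rho_inv f)"
begin

lemma bilip_ge_one: "1 \<le> L"
proof (rule ccontr)
  have L0: "0 \<le> L" by (rule lipschitz_on_nonneg[OF lipschitz_rho])
  have "1 = dist (rho_inv f (rho f 1)) (rho_inv f (rho f 0))" by simp
  also have "\<dots> \<le> L * dist (rho f 1) (rho f 0)"
    by (rule lipschitz_onD[OF lipschitz_rho_inv]) auto
  also have "\<dots> \<le> L * (L * dist (1::complex) 0)"
    using lipschitz_onD[OF lipschitz_rho, of 1 0] L0 by (intro mult_left_mono) auto
  finally have "1 \<le> L * L" by simp
  moreover assume "\<not> 1 \<le> L"
  then have "L * L \<le> L * 1" using L0 by (intro mult_left_mono) auto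
  ultimately show False using \<open>\<not> 1 \<le> L\<close> by linarith
qed

lemma infdist_curve_ge: "\<bar>cmod (rho_inv f z) - 1\<bar> / L \<le> infdist z (curve f)"
proof -
  have ne: "curve f \<noteq> {}" unfolding curve_def by auto
  have "\<bar>cmod (rho_inv f z) - 1\<bar> / L \<le> dist z c" if "c \<in> curve f" for c
  proof -
    have "\<bar>cmod (rho_inv f z) - 1\<bar> = \<bar>cmod (rho_inv f z) - cmod (rho_inv f c)\<bar>"
      using that curve_eq by simp
    also have "\<dots> \<le> dist (rho_inv f z) (rho_inv f c)"
      by (metis dist_norm norm_triangle_ineq3)
    also have "\<dots> \<le> L * dist z c" by (rule lipschitz_onD[OF lipschitz_rho_inv]) auto
    finally show ?thesis using bilip_ge_one by (simp add: divide_le_eq mult.commute)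
  qed
  then show ?thesis
    unfolding infdist_notempty[OF ne] by (intro cINF_greatest[OF ne])
qed

lemma infdist_curve_le:
  assumes "rho_inv f z \<noteq> 0"
  shows "infdist z (curve f) \<le> L * \<bar>cmod (rho_inv f z) - 1\<bar>"
proof -
  text \<open>The point of the curve on the same ray as \<open>z\<close>.\<close>
  define c where "c = rho f (sgn (rho_inv f z))"
  have "c \<in> curve f" unfolding c_def curve_eq using assms by (simp add: norm_sgn)
  then have "infdist z (curve f) \<le> dist (rho f (rho_inv f z)) c"
    using infdist_le by simp
  also have "\<dots> \<le> L * dist (rho_inv f z) (sgn (rho_inv f z))"
    unfolding c_def by (rule lipschitz_onD[OF lipschitz_rho]) auto
  also have "dist (rho_inv f z) (sgn (rho_inv f z)) = \<bar>cmod (rho_inv f z) - 1\<bar>"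
    using norm_diff_sgn[OF assms] by (simp add: dist_norm)
  finally show ?thesis .
qed

end

section \<open>The Whitney grid\<close>

text \<open>
  In the notation of the paper, \<open>r\<^sub>l = 1 + layer_gap \<epsilon> l\<close>, \<open>n\<^sub>l = grid_size \<epsilon> l\<close>,
  \<open>\<theta>\<^sub>j\<^sub>,\<^sub>l = grid_angle \<epsilon> j l\<close> and \<open>q\<^sub>j\<^sub>,\<^sub>l = whitney_point f \<epsilon> j l\<close>.
\<close>

definition layer_gap :: "real \<Rightarrow> nat \<Rightarrow> real" where
  "layer_gap \<epsilon> l = inverse ((1+\<epsilon>)^l)"

definition grid_size :: "real \<Rightarrow> nat \<Rightarrow> nat" where
  "grid_size \<epsilon> l = nat \<lceil>2*pi / \<epsilon> * (1 + (1+\<epsilon>)^l)\<rceil>"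

definition grid_angle :: "real \<Rightarrow> nat \<Rightarrow> nat \<Rightarrow> real" where
  "grid_angle \<epsilon> j l = - pi + 2*pi / real (grid_size \<epsilon> l) * real j"

definition whitney_point :: "(real \<Rightarrow> real) \<Rightarrow> real \<Rightarrow> nat \<Rightarrow> nat \<Rightarrow> complex" where
  "whitney_point f \<epsilon> j l =
     complex_of_real ((1 + layer_gap \<epsilon> l) * f (grid_angle \<epsilon> j l)) * cis (grid_angle \<epsilon> j l)"

definition whitney_points :: "(real \<Rightarrow> real) \<Rightarrow> real \<Rightarrow> complex set" where
  "whitney_points f \<epsilon> = (\<Union>l. {whitney_point f \<epsilon> j l | j. 1 \<le> j \<and> j \<le> grid_size \<epsilon> l})"

lemma layer_gap_pos: "0 < \<epsilon> \<Longrightarrow> 0 < layer_gap \<epsilon> l"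
  unfolding layer_gap_def by simp

lemma layer_gap_le_one: "0 < \<epsilon> \<Longrightarrow> layer_gap \<epsilon> l \<le> 1"
  unfolding layer_gap_def by (simp add: inverse_le_1_iff one_le_power)

lemma layer_gap_Suc: "0 < \<epsilon> \<Longrightarrow> layer_gap \<epsilon> (Suc l) = layer_gap \<epsilon> l / (1+\<epsilon>)"
  unfolding layer_gap_def by (simp add: field_simps)

lemma layer_gap_add: "0 < \<epsilon> \<Longrightarrow> layer_gap \<epsilon> l = layer_gap \<epsilon> (l + m) * (1+\<epsilon>)^m"
  unfolding layer_gap_def power_add by (simp add: field_simps)

lemma grid_size_ge_one:
  assumes "0 < \<epsilon>" shows "1 \<le> grid_size \<epsilon> l"
proof -
  have "0 < 2*pi / \<epsilon> * (1 + (1+\<epsilon>)^l)" using assms by (simp add: add_pos_pos)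
  then show ?thesis unfolding grid_size_def by linarith
qed

lemma grid_size_ge:
  assumes "0 < \<epsilon>"
  shows "2*pi * (1 + layer_gap \<epsilon> l) / (\<epsilon> * layer_gap \<epsilon> l) \<le> real (grid_size \<epsilon> l)"
proof -
  have "2*pi * (1 + layer_gap \<epsilon> l) / (\<epsilon> * layer_gap \<epsilon> l) = 2*pi / \<epsilon> * (1 + (1+\<epsilon>)^l)"
    using assms unfolding layer_gap_def by (simp add: field_simps)
  then show ?thesis unfolding grid_size_def using real_nat_ceiling_ge by simp
qed

lemma grid_spacing_le:
  assumes "0 < \<epsilon>"
  shows "2*pi / real (grid_size \<epsilon> l) * (1 + layer_gap \<epsilon> l) \<le> \<epsilon> * layer_gap \<epsilon> l"
  using grid_size_ge[OF assms, of l] grid_size_ge_one[OF assms, of l] layer_gap_pos[OF assms, of l] assms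
  by (simp add: field_simps)

lemma layer_gap_grid_size_le:
  assumes e: "0 < \<epsilon>"
  shows "layer_gap \<epsilon> l * real (grid_size \<epsilon> l) \<le> 4*pi / \<epsilon> + 1"
proof -
  define T where "T = layer_gap \<epsilon> l"
  have T: "0 < T" "T \<le> 1" unfolding T_def using layer_gap_pos[OF e] layer_gap_le_one[OF e] by auto
  have "real (grid_size \<epsilon> l) \<le> 2*pi / \<epsilon> * (1 + (1+\<epsilon>)^l) + 1"
    unfolding grid_size_def using e by (simp add: add_pos_pos less_imp_le)
  also have "(1+\<epsilon>)^l = 1 / T" unfolding T_def layer_gap_def by (simp add: divide_inverse)
  finally have "T * real (grid_size \<epsilon> l) \<le> T * (2*pi / \<epsilon> * (1 + 1 / T) + 1)"
    using T by (intro mult_left_mono) auto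
  also have "\<dots> = 2*pi / \<epsilon> * (T + 1) + T" using T e by (simp add: field_simps)
  also have "\<dots> \<le> 2*pi / \<epsilon> * 2 + 1" using T e by (intro add_mono mult_left_mono) auto
  finally show ?thesis unfolding T_def by simp
qed

lemma exists_layer:
  assumes e: "0 < \<epsilon>" and u: "0 < u" "u < 1"
  obtains l where "layer_gap \<epsilon> (Suc l) < u" "u \<le> layer_gap \<epsilon> l"
proof -
  obtain N where "1/u < (1+\<epsilon>)^N" using real_arch_pow[of "1+\<epsilon>" "1/u"] e by auto
  then have "layer_gap \<epsilon> N < u"
    unfolding layer_gap_def using u e by (simp add: field_simps)
  moreover have "\<not> layer_gap \<epsilon> 0 < u" using u unfolding layer_gap_def by simp
  ultimately obtain k where "\<forall>i\<le>k. \<not> layer_gap \<epsilon> i < u" "layer_gap \<epsilon> (Suc k) < u"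
    using ex_least_nat_less[of "\<lambda>i. layer_gap \<epsilon> i < u"] by blast
  then show ?thesis using that by (metis not_less order_refl)
qed

lemma exists_grid_angle:
  assumes n: "1 \<le> n" and \<phi>: "-pi < \<phi>" "\<phi> \<le> pi"
  obtains j :: nat where "1 \<le> j" "j \<le> n"
    "\<phi> \<le> -pi + 2*pi / real n * real j" "-pi + 2*pi / real n * real j < \<phi> + 2*pi / real n"
proof -
  define x where "x = (\<phi> + pi) * real n / (2*pi)"
  have n0: "0 < real n" using n by simp
  have x0: "0 < x" unfolding x_def using \<phi> n0 by simp
  have xn: "x \<le> real n" unfolding x_def using \<phi> n0 by (simp add: field_simps)
  define j where "j = nat \<lceil>x\<rceil>"
  have j: "x \<le> real j" "real j < x + 1" unfolding j_def using x0 by linarith+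
  have "1 \<le> j" unfolding j_def using x0 by linarith
  moreover have "j \<le> n" unfolding j_def using xn by simp
  moreover have "2*pi / real n * x = \<phi> + pi" unfolding x_def using n0 by (simp add: field_simps)
  moreover have "0 < 2*pi / real n" using n0 by simp
  then have "2*pi / real n * x \<le> 2*pi / real n * real j"
    "2*pi / real n * real j < 2*pi / real n * (x + 1)"
    using j by (simp_all only: mult_left_mono less_imp_le mult_strict_left_mono)
  ultimately show ?thesis using that by (simp add: distrib_left)
qed

lemma exists_grid_point_near:
  assumes e: "0 < \<epsilon>" and below: "layer_gap \<epsilon> (Suc l) < s - 1" and above: "s - 1 \<le> layer_gap \<epsilon> l"
    and \<phi>: "-pi < \<phi>" "\<phi> \<le> pi"
  obtains j where "1 \<le> j" "j \<le> grid_size \<epsilon> l"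
    "cmod (of_real (1 + layer_gap \<epsilon> l) * cis (grid_angle \<epsilon> j l) - of_real s * cis \<phi>)
       < 3/2 * (\<epsilon> * layer_gap \<epsilon> l)"
proof -
  define T where "T = layer_gap \<epsilon> l"
  have T0: "0 < T" unfolding T_def by (rule layer_gap_pos[OF e])
  obtain j where j: "1 \<le> j" "j \<le> grid_size \<epsilon> l"
    and a1: "\<phi> \<le> grid_angle \<epsilon> j l" and a2: "grid_angle \<epsilon> j l < \<phi> + 2*pi / real (grid_size \<epsilon> l)"
    using exists_grid_angle[OF grid_size_ge_one[OF e] \<phi>] unfolding grid_angle_def by blast
  define \<theta> where "\<theta> = grid_angle \<epsilon> j l"
  have s: "0 \<le> s" "s \<le> 1 + T"
    using below above layer_gap_pos[OF e, of "Suc l"] unfolding T_def by linarith+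
  have "1 + T - s < T - T / (1+\<epsilon>)"
    using below layer_gap_Suc[OF e, of l] unfolding T_def by simp
  also have "\<dots> \<le> \<epsilon> * T" using e T0 by (simp add: field_simps)
  finally have radial: "1 + T - s \<le> \<epsilon> * T" by simp
  have "(1 + T) * (\<theta> - \<phi>) \<le> (1 + T) * (2*pi / real (grid_size \<epsilon> l))"
    using a2 T0 unfolding \<theta>_def by (intro mult_left_mono) auto
  also have "\<dots> \<le> \<epsilon> * T"
    using grid_spacing_le[OF e, of l] unfolding T_def by (simp add: mult.commute)
  finally have angular: "(1 + T) * (\<theta> - \<phi>) \<le> \<epsilon> * T" .
  have "(cmod (of_real (1 + T) * cis \<theta> - of_real s * cis \<phi>))^2 \<le> (1 + T - s)^2 + ((1 + T) * (\<theta> - \<phi>))^2"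
    using norm_polar_diff_sq_le[OF s] .
  also have "\<dots> \<le> (\<epsilon> * T)^2 + (\<epsilon> * T)^2"
    using radial angular s a1 T0 unfolding \<theta>_def by (intro add_mono power_mono) auto
  also have "\<dots> < (3/2 * (\<epsilon> * T))^2"
    using e T0 by (simp add: power2_eq_square)
  finally have "cmod (of_real (1 + T) * cis \<theta> - of_real s * cis \<phi>) < 3/2 * (\<epsilon> * T)"
    by (rule power2_less_imp_less) (use e T0 in simp)
  then show ?thesis using that j unfolding T_def \<theta>_def by blast
qed

locale whitney_grid = bilipschitz_star_curve +
  fixes \<epsilon> :: real
  assumes eps_pos: "0 < \<epsilon>"
begin

lemma rho_inv_whitney_point:
  "rho_inv f (whitney_point f \<epsilon> j l) = of_real (1 + layer_gap \<epsilon> l) * cis (grid_angle \<epsilon> j l)"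
proof -
  have "whitney_point f \<epsilon> j l = rho f (of_real (1 + layer_gap \<epsilon> l) * cis (grid_angle \<epsilon> j l))"
    using rho_polar[of "1 + layer_gap \<epsilon> l" "grid_angle \<epsilon> j l"] layer_gap_pos[OF eps_pos, of l]
    unfolding whitney_point_def by simp
  then show ?thesis by simp
qed

lemma norm_rho_inv_whitney_point: "cmod (rho_inv f (whitney_point f \<epsilon> j l)) = 1 + layer_gap \<epsilon> l"
  using layer_gap_pos[OF eps_pos, of l] unfolding rho_inv_whitney_point norm_mult norm_of_real by simp

lemma infdist_whitney_point_ge: "layer_gap \<epsilon> l / L \<le> infdist (whitney_point f \<epsilon> j l) (curve f)"
  using infdist_curve_ge[of "whitney_point f \<epsilon> j l"] layer_gap_pos[OF eps_pos, of l]
  by (simp add: norm_rho_inv_whitney_point)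

lemma infdist_whitney_point_le: "infdist (whitney_point f \<epsilon> j l) (curve f) \<le> L * layer_gap \<epsilon> l"
proof -
  have "rho_inv f (whitney_point f \<epsilon> j l) \<noteq> 0"
    using norm_rho_inv_whitney_point[of j l] layer_gap_pos[OF eps_pos, of l] by auto
  from infdist_curve_le[OF this] show ?thesis
    using layer_gap_pos[OF eps_pos, of l] by (simp add: norm_rho_inv_whitney_point)
qed

lemma whitney_point_notin_curve: "whitney_point f \<epsilon> j l \<notin> curve f"
  using layer_gap_pos[OF eps_pos, of l] by (simp add: curve_eq norm_rho_inv_whitney_point)

lemma whitney_points_cover:
  assumes z1: "1 < cmod (rho_inv f z)" and z2: "infdist z (curve f) < 1 / L"
  obtains j l where "1 \<le> j" "j \<le> grid_size \<epsilon> l"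
    "dist (whitney_point f \<epsilon> j l) z < 3/2 * L^2 * \<epsilon> * infdist (whitney_point f \<epsilon> j l) (curve f)"
proof -
  define w where "w = rho_inv f z"
  have L0: "0 < L" using bilip_ge_one by simp
  have "(cmod w - 1) / L < 1 / L"
    using infdist_curve_ge[of z] z1 z2 unfolding w_def by simp
  then have "cmod w - 1 < 1" using L0 by (simp add: divide_strict_right_mono_neg divide_less_cancel)
  then obtain l where l: "layer_gap \<epsilon> (Suc l) < cmod w - 1" "cmod w - 1 \<le> layer_gap \<epsilon> l"
    using exists_layer[OF eps_pos, of "cmod w - 1"] z1 unfolding w_def by auto
  obtain j where j: "1 \<le> j" "j \<le> grid_size \<epsilon> l"
    and near: "cmod (of_real (1 + layer_gap \<epsilon> l) * cis (grid_angle \<epsilon> j l) - of_real (cmod w) * cis (Arg w))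
                 < 3/2 * (\<epsilon> * layer_gap \<epsilon> l)"
    using exists_grid_point_near[OF eps_pos l] Arg_bounded[of w] by blast
  have "w \<noteq> 0" using z1 unfolding w_def by auto
  then have "of_real (cmod w) * cis (Arg w) = w"
    by (simp add: cis_Arg sgn_div_norm scaleR_conv_of_real)
  then have near': "dist (rho_inv f (whitney_point f \<epsilon> j l)) w < 3/2 * (\<epsilon> * layer_gap \<epsilon> l)"
    using near by (simp add: rho_inv_whitney_point dist_norm)
  have "dist (whitney_point f \<epsilon> j l) z = dist (rho f (rho_inv f (whitney_point f \<epsilon> j l))) (rho f w)"
    unfolding w_def by simp
  also have "\<dots> \<le> L * dist (rho_inv f (whitney_point f \<epsilon> j l)) w"
    by (rule lipschitz_onD[OF lipschitz_rho]) auto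
  also have "\<dots> < L * (3/2 * (\<epsilon> * layer_gap \<epsilon> l))"
    using near' L0 by simp
  also have "\<dots> = 3/2 * L^2 * \<epsilon> * (layer_gap \<epsilon> l / L)"
    using L0 by (simp add: power2_eq_square)
  also have "\<dots> \<le> 3/2 * L^2 * \<epsilon> * infdist (whitney_point f \<epsilon> j l) (curve f)"
    using infdist_whitney_point_ge eps_pos by (intro mult_left_mono) auto
  finally show ?thesis using that j by blast
qed

definition hit_indices :: "real \<Rightarrow> complex \<Rightarrow> nat \<Rightarrow> nat set" where
  "hit_indices e y l = {j. 1 \<le> j \<and> j \<le> grid_size \<epsilon> l \<and>
     dist (whitney_point f \<epsilon> j l) y < e * infdist (whitney_point f \<epsilon> j l) (curve f)}"

text \<open>
  The gaps of two layers hitting \<open>y\<close> differ by a factor at most \<open>5/3 L^2\<close>, and Bernoulli's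
  inequality turns this into a bound on the difference of the layer indices.
\<close>
lemma hit_layers_close:
  assumes e: "e \<le> 1/4" and hit: "j1 \<in> hit_indices e y l1" "j2 \<in> hit_indices e y l2" and "l1 \<le> l2"
  shows "l2 - l1 \<le> nat \<lceil>5/3 * L^2 / \<epsilon>\<rceil>"
proof -
  define m where "m = l2 - l1"
  have L0: "0 < L" using bilip_ge_one by simp
  have "layer_gap \<epsilon> l1 \<le> L * infdist (whitney_point f \<epsilon> j1 l1) (curve f)"
    using infdist_whitney_point_ge[of l1 j1] L0 by (simp add: divide_le_eq mult.commute)
  also have "\<dots> \<le> L * (4/3 * infdist y (curve f))"
    using infdist_comparable(1)[of "whitney_point f \<epsilon> j1 l1" y e "curve f", OF _ e] hit(1) L0 unfolding hit_indices_def by simp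
  also have "\<dots> \<le> L * (4/3 * (5/4 * infdist (whitney_point f \<epsilon> j2 l2) (curve f)))"
    using infdist_comparable(2)[of "whitney_point f \<epsilon> j2 l2" y e "curve f", OF _ e] hit(2) L0 unfolding hit_indices_def by simp
  also have "\<dots> \<le> L * (4/3 * (5/4 * (L * layer_gap \<epsilon> l2)))"
    using infdist_whitney_point_le[of j2 l2] L0 by simp
  finally have "layer_gap \<epsilon> l2 * (1+\<epsilon>)^m \<le> layer_gap \<epsilon> l2 * (5/3 * L^2)"
    using layer_gap_add[OF eps_pos, of l1 m] \<open>l1 \<le> l2\<close> unfolding m_def
    by (simp add: power2_eq_square algebra_simps)
  then have "(1+\<epsilon>)^m \<le> 5/3 * L^2"
    using layer_gap_pos[OF eps_pos, of l2] by simp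
  moreover have "1 + real m * \<epsilon> \<le> (1+\<epsilon>)^m"
    using eps_pos by (intro Bernoulli_inequality) simp
  ultimately have "real m \<le> 5/3 * L^2 / \<epsilon>"
    using eps_pos by (simp add: le_divide_eq)
  then show ?thesis unfolding m_def by linarith
qed

lemma hit_direction:
  assumes "0 \<le> e" and hit: "j \<in> hit_indices e y l"
  shows "cmod (sgn (rho_inv f y) - cis (grid_angle \<epsilon> j l)) < 2 * L^2 * e * layer_gap \<epsilon> l"
proof -
  define p where "p = rho_inv f (whitney_point f \<epsilon> j l)"
  have L0: "0 < L" using bilip_ge_one by simp
  have np: "cmod p = 1 + layer_gap \<epsilon> l"
    unfolding p_def by (rule norm_rho_inv_whitney_point)
  then have p0: "p \<noteq> 0" using layer_gap_pos[OF eps_pos, of l] by auto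
  have "sgn (complex_of_real (1 + layer_gap \<epsilon> l)) = 1"
    using layer_gap_pos[OF eps_pos, of l] unfolding sgn_of_real by simp
  then have sgp: "sgn p = cis (grid_angle \<epsilon> j l)"
    unfolding p_def rho_inv_whitney_point sgn_mult by simp
  have "cmod (rho_inv f y - p) \<le> L * dist (whitney_point f \<epsilon> j l) y"
    unfolding p_def using lipschitz_onD[OF lipschitz_rho_inv] by (simp add: dist_norm norm_minus_commute)
  also have "\<dots> < L * (e * infdist (whitney_point f \<epsilon> j l) (curve f))"
    using hit L0 unfolding hit_indices_def by simp
  also have "\<dots> \<le> L * (e * (L * layer_gap \<epsilon> l))"
    using infdist_whitney_point_le[of j l] L0 assms(1) by (intro mult_left_mono) auto
  finally have dp: "cmod (rho_inv f y - p) < L^2 * e * layer_gap \<epsilon> l"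
    by (simp add: power2_eq_square algebra_simps)
  have "1 * cmod (sgn (rho_inv f y) - sgn p) \<le> cmod p * cmod (sgn (rho_inv f y) - sgn p)"
    using np layer_gap_pos[OF eps_pos, of l] by (intro mult_right_mono) auto
  also have "\<dots> \<le> 2 * cmod (rho_inv f y - p)" by (rule norm_sgn_diff_le[OF p0])
  finally show ?thesis using dp sgp by simp
qed

text \<open>
  All hit grid angles of a layer lie within \<open>2 L^2 e t\<^sub>l\<close> of the direction of \<open>rho\<^sup>-\<^sup>1 y\<close>,
  while the grid spacing is of order \<open>\<epsilon> t\<^sub>l\<close>.
\<close>
lemma card_hit_indices_le:
  assumes "0 \<le> e"
  shows "card (hit_indices e y l) \<le> 4 * nat \<lceil>8 * L^2 * e * (4*pi/\<epsilon> + 1) / pi\<rceil> + 3"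
proof (rule card_cyclically_close_le)
  define n where "n = grid_size \<epsilon> l"
  define T where "T = layer_gap \<epsilon> l"
  show "hit_indices e y l \<subseteq> {1..grid_size \<epsilon> l}" unfolding hit_indices_def by auto
  have n1: "1 \<le> n" unfolding n_def by (rule grid_size_ge_one[OF eps_pos])
  show "\<forall>j\<in>hit_indices e y l. \<forall>k\<in>hit_indices e y l.
          min \<bar>real j - real k\<bar> (real (grid_size \<epsilon> l) - \<bar>real j - real k\<bar>)
          < 8 * L^2 * e * (4*pi/\<epsilon> + 1) / pi"
  proof (intro ballI)
    fix j k assume jJ: "j \<in> hit_indices e y l" and kJ: "k \<in> hit_indices e y l"
    define M where "M = min \<bar>real j - real k\<bar> (real n - \<bar>real j - real k\<bar>)"
    have "cmod (cis (grid_angle \<epsilon> j l) - cis (grid_angle \<epsilon> k l))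
        \<le> cmod (sgn (rho_inv f y) - cis (grid_angle \<epsilon> k l)) + cmod (sgn (rho_inv f y) - cis (grid_angle \<epsilon> j l))"
      by (metis norm_triangle_ineq4 diff_diff_eq2 diff_add_cancel add_diff_cancel_left')
    also have "\<dots> < 4 * L^2 * e * T"
      using hit_direction[OF assms jJ] hit_direction[OF assms kJ] unfolding T_def by linarith
    finally have "cmod (cis (grid_angle \<epsilon> j l) - cis (grid_angle \<epsilon> k l)) < 4 * L^2 * e * T" .
    moreover have "pi / (2 * real n) * M \<le> cmod (cis (grid_angle \<epsilon> j l) - cis (grid_angle \<epsilon> k l))"
      using jJ kJ unfolding M_def grid_angle_def n_def hit_indices_def
      by (intro norm_cis_grid_diff_ge[OF n1[unfolded n_def]]) auto
    ultimately have "pi / (2 * real n) * M < 4 * L^2 * e * T" by linarith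
    then have "pi * M < 8 * L^2 * e * (T * real n)"
      using n1 by (simp add: field_simps)
    also have "\<dots> \<le> 8 * L^2 * e * (4*pi/\<epsilon> + 1)"
      using layer_gap_grid_size_le[OF eps_pos, of l] assms unfolding T_def n_def
      by (intro mult_left_mono) auto
    finally show "min \<bar>real j - real k\<bar> (real (grid_size \<epsilon> l) - \<bar>real j - real k\<bar>)
        < 8 * L^2 * e * (4*pi/\<epsilon> + 1) / pi"
      unfolding M_def n_def by (simp add: less_divide_eq mult.commute)
  qed
qed

lemma hits_in_few_layers:
  assumes "e \<le> 1/4"
  obtains l0 where "{x \<in> whitney_points f \<epsilon>. y \<in> ball x (e * infdist x (curve f))}
    \<subseteq> (\<Union>l\<in>{l0..l0 + nat \<lceil>5/3 * L^2 / \<epsilon>\<rceil>}. (\<lambda>j. whitney_point f \<epsilon> j l) ` hit_indices e y l)"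
proof -
  let ?S = "{x \<in> whitney_points f \<epsilon>. y \<in> ball x (e * infdist x (curve f))}"
  have S: "\<exists>l. \<exists>j\<in>hit_indices e y l. x = whitney_point f \<epsilon> j l" if x: "x \<in> ?S" for x
  proof -
    obtain l j where "1 \<le> j" "j \<le> grid_size \<epsilon> l" "x = whitney_point f \<epsilon> j l"
      using x unfolding whitney_points_def by blast
    moreover from this have "j \<in> hit_indices e y l"
      using x unfolding hit_indices_def by (simp add: dist_commute)
    ultimately show ?thesis by blast
  qed
  show ?thesis
  proof (cases "\<exists>l. hit_indices e y l \<noteq> {}")
    case False
    then have "?S = {}" using S by blast
    then show ?thesis by (metis that empty_subsetI)
  next
    case True
    define l0 where "l0 = (LEAST l. hit_indices e y l \<noteq> {})"
    have "hit_indices e y l0 \<noteq> {}"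
      unfolding l0_def by (rule LeastI_ex) (rule True)
    then obtain j0 where j0: "j0 \<in> hit_indices e y l0" by blast
    have layer: "l \<in> {l0..l0 + nat \<lceil>5/3 * L^2 / \<epsilon>\<rceil>}" if "j \<in> hit_indices e y l" for j l
    proof -
      have "l0 \<le> l" unfolding l0_def by (rule Least_le) (use that in blast)
      then show ?thesis using hit_layers_close[OF assms j0 that] by simp
    qed
    show ?thesis
    proof (rule that, rule subsetI)
      fix x assume "x \<in> ?S"
      then obtain l j where "j \<in> hit_indices e y l" "x = whitney_point f \<epsilon> j l" using S by blast
      then show "x \<in> (\<Union>l\<in>{l0..l0 + nat \<lceil>5/3 * L^2 / \<epsilon>\<rceil>}. (\<lambda>j. whitney_point f \<epsilon> j l) ` hit_indices e y l)"
        using layer by blast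
    qed
  qed
qed

lemma whitney_points_bounded_overlap:
  assumes "0 \<le> e" "e \<le> 1/4"
  shows "\<exists>M::nat. \<forall>y. finite {x \<in> whitney_points f \<epsilon>. y \<in> ball x (e * infdist x (curve f))} \<and>
           card {x \<in> whitney_points f \<epsilon>. y \<in> ball x (e * infdist x (curve f))} \<le> M"
proof -
  define K where "K = nat \<lceil>5/3 * L^2 / \<epsilon>\<rceil>"
  define B where "B = 4 * nat \<lceil>8 * L^2 * e * (4*pi/\<epsilon> + 1) / pi\<rceil> + 3"
  show ?thesis
  proof (rule exI[of _ "(K + 1) * B"], intro allI conjI)
    fix y
    let ?S = "{x \<in> whitney_points f \<epsilon>. y \<in> ball x (e * infdist x (curve f))}"
    obtain l0 where sub: "?S \<subseteq> (\<Union>l\<in>{l0..l0 + K}. (\<lambda>j. whitney_point f \<epsilon> j l) ` hit_indices e y l)"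
      using hits_in_few_layers[OF assms(2)] unfolding K_def by blast
    have fin: "finite (hit_indices e y l)" for l
      by (rule finite_subset[of _ "{..grid_size \<epsilon> l}"]) (auto simp: hit_indices_def)
    then have fin_layers: "finite (\<Union>l\<in>{l0..l0 + K}. (\<lambda>j. whitney_point f \<epsilon> j l) ` hit_indices e y l)"
      by simp
    then show "finite ?S" using sub by (rule finite_subset[rotated])
    have "card ((\<lambda>j. whitney_point f \<epsilon> j l) ` hit_indices e y l) \<le> B" for l
      using card_image_le[OF fin] card_hit_indices_le[OF assms(1)] unfolding B_def by (rule le_trans)
    then have "card (\<Union>l\<in>{l0..l0 + K}. (\<lambda>j. whitney_point f \<epsilon> j l) ` hit_indices e y l) \<le> (K + 1) * B"
      using card_UN_le[of "{l0..l0 + K}" "\<lambda>l. (\<lambda>j. whitney_point f \<epsilon> j l) ` hit_indices e y l"]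
        sum_mono[of "{l0..l0 + K}" "\<lambda>l. card ((\<lambda>j. whitney_point f \<epsilon> j l) ` hit_indices e y l)" "\<lambda>_. B"]
      by simp
    then show "card ?S \<le> (K + 1) * B"
      using card_mono[OF fin_layers sub] by linarith
  qed
qed

theorem whitney_set_whitney_points:
  assumes small: "3/2 * L^2 * \<epsilon> \<le> 1/4"
  shows "whitney_set (3/2 * L^2 * \<epsilon>) (Omega_minus_delta f (1/L)) (curve f) (whitney_points f \<epsilon>)"
  unfolding whitney_set_def
proof (intro conjI)
  show "Omega_minus_delta f (1/L) \<subseteq> (\<Union>x\<in>whitney_points f \<epsilon>. ball x (3/2 * L^2 * \<epsilon> * infdist x (curve f)))"
  proof
    fix z assume "z \<in> Omega_minus_delta f (1/L)"
    then have "1 < cmod (rho_inv f z)" "infdist z (curve f) < 1 / L"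
      using Omega_minus_subset unfolding Omega_minus_delta_def by auto
    then obtain j l where "1 \<le> j" "j \<le> grid_size \<epsilon> l"
      "dist (whitney_point f \<epsilon> j l) z < 3/2 * L^2 * \<epsilon> * infdist (whitney_point f \<epsilon> j l) (curve f)"
      by (rule whitney_points_cover)
    then show "z \<in> (\<Union>x\<in>whitney_points f \<epsilon>. ball x (3/2 * L^2 * \<epsilon> * infdist x (curve f)))"
      unfolding whitney_points_def by auto
  qed
  show "\<exists>M::nat. \<forall>y. finite {x \<in> whitney_points f \<epsilon>. y \<in> ball x (3/2 * L^2 * \<epsilon> * infdist x (curve f))}
      \<and> card {x \<in> whitney_points f \<epsilon>. y \<in> ball x (3/2 * L^2 * \<epsilon> * infdist x (curve f))} \<le> M"
    by (rule whitney_points_bounded_overlap) (use small eps_pos in simp)+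
  have "{whitney_point f \<epsilon> j l | j. 1 \<le> j \<and> j \<le> grid_size \<epsilon> l}
      = (\<lambda>j. whitney_point f \<epsilon> j l) ` {1..grid_size \<epsilon> l}" for l
    by auto
  then show "countable (whitney_points f \<epsilon>)"
    unfolding whitney_points_def by (simp add: countable_finite)
  show "Omega_minus_delta f (1/L) \<subseteq> - curve f"
    using Omega_minus_subset unfolding Omega_minus_delta_def curve_eq by auto
  show "whitney_points f \<epsilon> \<subseteq> - curve f"
    unfolding whitney_points_def using whitney_point_notin_curve by auto
qed (use closed_curve small in auto)

end

theorem mainTheorem17:
  fixes r\<gamma> :: "real \<Rightarrow> real" and \<epsilon> :: real
  assumes per: "\<forall>\<theta>. r\<gamma> (\<theta> + 2*pi) = r\<gamma> \<theta>"
    and pos: "\<forall>\<theta>. r\<gamma> \<theta> > 0"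
    and lip: "\<exists>K. K-lipschitz_on UNIV r\<gamma>"
    and eps_pos: "\<epsilon> > 0"
    and eps_small: "3/2 * (max (Lip (rho r\<gamma>)) (Lip (inv (rho r\<gamma>))))\<^sup>2 * \<epsilon> \<le> 1/4"
  shows "let \<LL> = max (Lip (rho r\<gamma>)) (Lip (inv (rho r\<gamma>)));
             \<epsilon>' = 3/2 * \<LL>\<^sup>2 * \<epsilon>;
             n = (\<lambda>l::nat. nat \<lceil>2*pi / \<epsilon> * (1 + (1+\<epsilon>)^l)\<rceil>);
             rl = (\<lambda>l::nat. 1 + inverse ((1+\<epsilon>)^l));
             \<theta> = (\<lambda>j::nat. \<lambda>l::nat. - pi + 2*pi / real (n l) * real j);
             q = (\<lambda>j l. complex_of_real (rl l * r\<gamma> (\<theta> j l)) * cis (\<theta> j l))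
         in whitney_set \<epsilon>' (Omega_minus_delta r\<gamma> (1/\<LL>)) (curve r\<gamma>)
              (\<Union>l. {q j l | j. 1 \<le> j \<and> j \<le> n l})"
proof -
  interpret star_curve r\<gamma> using per pos lip by unfold_locales
  define L where "L = max (Lip (rho r\<gamma>)) (Lip (inv (rho r\<gamma>)))"
  have "L-lipschitz_on UNIV (rho r\<gamma>)" "L-lipschitz_on UNIV (rho_inv r\<gamma>)"
    using Lip_lipschitz_on ex_lipschitz_rho ex_lipschitz_rho_inv
    unfolding L_def inv_rho by (metis lipschitz_on_le max.cobounded1 max.cobounded2)+
  then interpret whitney_grid r\<gamma> L \<epsilon> using eps_pos by unfold_locales
  have "whitney_set (3/2 * L^2 * \<epsilon>) (Omega_minus_delta r\<gamma> (1/L)) (curve r\<gamma>) (whitney_points r\<gamma> \<epsilon>)"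
    by (rule whitney_set_whitney_points[OF eps_small[folded L_def]])
  then show ?thesis
    unfolding Let_def L_def whitney_points_def whitney_point_def grid_angle_def grid_size_def layer_gap_def .
qed

end
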